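(* Let $M=\{D_1,\dots,D_m\}$, $m\ge3$, be a 2-disk system of pairwise distinct disks whose Vietoris–Rips scale satisfies $\nu_M>0$. Then for all $i\ne j$ and $k\notin\{i,j\}$ the map $\Lambda^k_{i,j}:[\nu_M,\infty)\to\mathbb R$, $\lambda\mapsto\lambda r_k-\|d_{ij}(\lambda)-c_k\|$, is continuous, and consequently $\rho_M:[\nu_M,\infty)\to\mathbb R$ is continuous.
   Context: A 2-disk system is a finite collection of closed disks $D_i=D(c_i;r_i)\subset\mathbb R^2$ with $r_i>0$; $\partial D$ is the boundary circle. $\nu_M=\max_{i<j}\|c_i-c_j\|/(r_i+r_j)$ is the Vietoris–Rips scale, so for $\lambda\ge\nu_M$ the disks $D(c_i;\lambda r_i)$ pairwise intersect. Definition of $d_{ij}$ for two intersecting disks $D_i,D_j$ ($i\ne j$): write $c_j-c_i=(a,b)$, $\mathbf n_{ij}=(-b,a)$. (1) If $\partial D_i\cap\partial D_j\ne\emptyset$, $d_{ij}$ is the unique point of $\partial D_i\cap\partial D_j$ with $\langle d_{ij}-c_i,\mathbf n_{ij}\rangle\ge0$. (2) If $\partial D_i\cap\partial D_j=\emptyset$, let $\lambda_0=\|c_i-c_j\|/|r_i-r_j|$ and $d_{ij}$ is the unique point of $\partial D(c_i;\lambda_0 r_i)\cap\partial D(c_j;\lambda_0 r_j)$ (equal to $c_i$ if $c_i=c_j$). $d_{ij}(\lambda)$ denotes this point for the rescaled disks $D(c_i;\lambda r_i),D(c_j;\lambda r_j)$. For a 2-disk system $M$ with $m\ge3$ pairwise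 intersecting disks, $\rho(M)=\max_{i\ne j}\min_{k\notin\{i,j\}}\big(r_k-\|d_{ij}-c_k\|\big)$, and $\rho_M(\lambda)=\rho(M_\lambda)=\max_{i\neq j}\min_{k\notin\{i,j\}}\Lambda^k_{i,j}(\lambda)$ for $\lambda\ge\nu_M$, where $M_\lambda=\{D(c_i;\lambda r_i)\}$. *)

theory Defs
  imports "HOL-Analysis.Analysis"
begin

text \<open>The plane R^2 is modelled as the complex numbers; a point (a,b) is a + i b.
  A 2-disk system with m disks is given by centres c :: nat => complex and radii
  r :: nat => real, indexed by {..<m}; the disk D_i is cball (c i) (r i), its
  boundary circle is sphere (c i) (r i).\<close>

definition vr_scale :: "nat \<Rightarrow> (nat \<Rightarrow> complex) \<Rightarrow> (nat \<Rightarrow> real) \<Rightarrow> real" where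
  "vr_scale m c r = Max {cmod (c i - c j) / (r i + r j) | i j. i < j \<and> j < m}"

text \<open>The point d_ij for two intersecting disks D(ci;ri), D(cj;rj).
  The normal vector n_ij = (-b,a) for cj - ci = (a,b) is i * (cj - ci).\<close>
definition dpt :: "complex \<Rightarrow> real \<Rightarrow> complex \<Rightarrow> real \<Rightarrow> complex" where
  "dpt ci ri cj rj =
     (if sphere ci ri \<inter> sphere cj rj \<noteq> {}
      then (THE d. d \<in> sphere ci ri \<inter> sphere cj rj \<and> (d - ci) \<bullet> (\<i> * (cj - ci)) \<ge> 0)
      else (let l0 = cmod (ci - cj) / \<bar>ri - rj\<bar>
            in THE d. d \<in> sphere ci (l0 * ri) \<inter> sphere cj (l0 * rj)))"

definition dpt_scaled :: "(nat \<Rightarrow> complex) \<Rightarrow> (nat \<Rightarrow> real) \<Rightarrow> nat \<Rightarrow> nat \<Rightarrow> real \<Rightarrow> complex" where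
  "dpt_scaled c r i j lam = dpt (c i) (lam * r i) (c j) (lam * r j)"

definition Lam :: "(nat \<Rightarrow> complex) \<Rightarrow> (nat \<Rightarrow> real) \<Rightarrow> nat \<Rightarrow> nat \<Rightarrow> nat \<Rightarrow> real \<Rightarrow> real" where
  "Lam c r k i j lam = lam * r k - cmod (dpt_scaled c r i j lam - c k)"

definition rho_fun :: "nat \<Rightarrow> (nat \<Rightarrow> complex) \<Rightarrow> (nat \<Rightarrow> real) \<Rightarrow> real \<Rightarrow> real" where
  "rho_fun m c r lam =
     Max {Min {Lam c r k i j lam | k. k < m \<and> k \<noteq> i \<and> k \<noteq> j} | i j. i < m \<and> j < m \<and> i \<noteq> j}"

end

theory Submission
  imports Defs
begin

text \<open>For disks with distinct centres, d_ij is the intersection point of the two boundary circles on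
  the side of the normal n_ij; an affine change of coordinates reduces it to the intersection of
  |z| = A and |z - 1| = B in the upper half-plane, which has an explicit formula continuous in the
  radii. The rescaled circles intersect as long as \<lambda> |r_i - r_j| \<le> \<parallel>c_i - c_j\<parallel>; beyond that
  threshold \<lambda>_0 the definition of d_ij takes the (tangential) intersection at scale \<lambda>_0, so
  d_ij(\<lambda>) is the intersection point at the clamped scale min \<lambda> \<lambda>_0 and depends continuously on
  \<lambda>. When the centres coincide, d_ij(\<lambda>) is the common centre.\<close>

definition unit_apex :: "real \<Rightarrow> real \<Rightarrow> complex" where
  "unit_apex A B = (let x = (A\<^sup>2 - B\<^sup>2 + 1) / 2 in Complex x (sqrt (A\<^sup>2 - x\<^sup>2)))"

lemma unit_apex_height_factor:
  fixes A B :: real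
  shows "4 * (A\<^sup>2 - ((A\<^sup>2 - B\<^sup>2 + 1) / 2)\<^sup>2) = ((A + B)\<^sup>2 - 1) * (1 - (A - B)\<^sup>2)"
  by (simp add: power2_eq_square field_simps)

lemma unit_circles_point_coords:
  fixes z :: complex
  assumes "cmod z = A" "cmod (z - 1) = B"
  shows "Re z = (A\<^sup>2 - B\<^sup>2 + 1) / 2" "(Im z)\<^sup>2 = A\<^sup>2 - ((A\<^sup>2 - B\<^sup>2 + 1) / 2)\<^sup>2"
proof -
  have A: "A\<^sup>2 = (Re z)\<^sup>2 + (Im z)\<^sup>2" using assms(1) cmod_power2 by metis
  have B: "B\<^sup>2 = (Re z - 1)\<^sup>2 + (Im z)\<^sup>2" using assms(2) cmod_power2[of "z - 1"] by simp
  show Re: "Re z = (A\<^sup>2 - B\<^sup>2 + 1) / 2" using A B by (simp add: power2_eq_square algebra_simps)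
  show "(Im z)\<^sup>2 = A\<^sup>2 - ((A\<^sup>2 - B\<^sup>2 + 1) / 2)\<^sup>2" using A Re by simp
qed

lemma unit_apex_norms:
  assumes "A \<ge> 0" "B \<ge> 0" "\<bar>A - B\<bar> \<le> 1" "1 \<le> A + B"
  shows "cmod (unit_apex A B) = A" "cmod (unit_apex A B - 1) = B" "Im (unit_apex A B) \<ge> 0"
proof -
  define x where "x = (A\<^sup>2 - B\<^sup>2 + 1) / 2"
  have "(A + B)\<^sup>2 \<ge> 1" using assms(4) by (simp add: one_le_power)
  moreover have "(A - B)\<^sup>2 \<le> 1" using assms(3) by (metis abs_le_square_iff abs_one one_power2)
  ultimately have "((A + B)\<^sup>2 - 1) * (1 - (A - B)\<^sup>2) \<ge> 0" by simp
  then have height: "A\<^sup>2 - x\<^sup>2 \<ge> 0" using unit_apex_height_factor[of A B] by (simp add: x_def)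
  have z: "unit_apex A B = Complex x (sqrt (A\<^sup>2 - x\<^sup>2))" by (simp add: unit_apex_def Let_def x_def)
  show "Im (unit_apex A B) \<ge> 0" using height by (simp add: z)
  have "(cmod (unit_apex A B))\<^sup>2 = A\<^sup>2" using height by (simp add: z cmod_power2)
  then show "cmod (unit_apex A B) = A" using assms(1) by (simp add: power2_eq_iff_nonneg)
  have "(cmod (unit_apex A B - 1))\<^sup>2 = (x - 1)\<^sup>2 + (A\<^sup>2 - x\<^sup>2)"
    using height by (simp add: z cmod_power2)
  also have "\<dots> = B\<^sup>2" by (simp add: x_def power2_eq_square algebra_simps)
  finally show "cmod (unit_apex A B - 1) = B" using assms(2) by (simp add: power2_eq_iff_nonneg)
qed

lemma unit_apex_unique:
  assumes "cmod z = A" "cmod (z - 1) = B" "Im z \<ge> 0"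
  shows "z = unit_apex A B"
proof -
  note coords = unit_circles_point_coords[OF assms(1,2)]
  have "Im z = sqrt ((Im z)\<^sup>2)" using assms(3) by simp
  then show ?thesis using coords by (simp add: unit_apex_def Let_def complex_eq_iff)
qed

lemma unit_apex_unique_tangent:
  assumes "cmod z = A" "cmod (z - 1) = B" "\<bar>A - B\<bar> = 1"
  shows "z = unit_apex A B"
proof -
  note coords = unit_circles_point_coords[OF assms(1,2)]
  have "(A - B)\<^sup>2 = 1" using assms(3) by (metis power2_abs one_power2)
  then have "A\<^sup>2 - ((A\<^sup>2 - B\<^sup>2 + 1) / 2)\<^sup>2 = 0" using unit_apex_height_factor[of A B] by simp
  then have "Im z = 0" using coords(2) by simp
  then show ?thesis using unit_apex_unique[OF assms(1,2)] by simp
qed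

text \<open>The affine map z \<mapsto> ci + (cj - ci) z sends 0, 1 to ci, cj and the upper half-plane to the
  side of the normal \<i> (cj - ci).\<close>
definition circles_apex :: "complex \<Rightarrow> real \<Rightarrow> complex \<Rightarrow> real \<Rightarrow> complex" where
  "circles_apex ci a cj b = ci + (cj - ci) * unit_apex (a / cmod (cj - ci)) (b / cmod (cj - ci))"

lemma inner_mult_normal:
  fixes w z :: complex
  shows "(w * z) \<bullet> (\<i> * w) = (cmod w)\<^sup>2 * Im z"
proof -
  have "(cmod w)\<^sup>2 = (Re w)\<^sup>2 + (Im w)\<^sup>2" by (rule cmod_power2)
  then show ?thesis by (simp add: inner_complex_def algebra_simps power2_eq_square)
qed

lemma circle_point_normalized:
  assumes "ci \<noteq> cj" "dist ci p = a" "dist cj p = b"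
  defines "z \<equiv> (p - ci) / (cj - ci)"
  shows "p = ci + (cj - ci) * z" "cmod z = a / cmod (cj - ci)" "cmod (z - 1) = b / cmod (cj - ci)"
    "(p - ci) \<bullet> (\<i> * (cj - ci)) \<ge> 0 \<longleftrightarrow> Im z \<ge> 0"
proof -
  have w: "cj - ci \<noteq> 0" using assms(1) by simp
  show p: "p = ci + (cj - ci) * z" using w by (simp add: z_def)
  show "cmod z = a / cmod (cj - ci)"
    using assms(2) by (simp add: z_def norm_divide dist_norm norm_minus_commute)
  have "z - 1 = (p - cj) / (cj - ci)" using w by (simp add: z_def field_simps)
  then show "cmod (z - 1) = b / cmod (cj - ci)"
    using assms(3) by (simp add: norm_divide dist_norm norm_minus_commute)
  have "(p - ci) \<bullet> (\<i> * (cj - ci)) = (cmod (cj - ci))\<^sup>2 * Im z"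
    using inner_mult_normal[of "cj - ci" z] p by simp
  then show "(p - ci) \<bullet> (\<i> * (cj - ci)) \<ge> 0 \<longleftrightarrow> Im z \<ge> 0"
    using w by (simp add: zero_le_mult_iff)
qed

lemma circles_apex_on_circles:
  assumes "ci \<noteq> cj" "a \<ge> 0" "b \<ge> 0" "\<bar>a - b\<bar> \<le> cmod (cj - ci)" "cmod (cj - ci) \<le> a + b"
  shows "dist ci (circles_apex ci a cj b) = a" "dist cj (circles_apex ci a cj b) = b"
    "(circles_apex ci a cj b - ci) \<bullet> (\<i> * (cj - ci)) \<ge> 0"
proof -
  define D where "D = cmod (cj - ci)"
  have D: "D > 0" using assms(1) by (simp add: D_def)
  have "\<bar>a / D - b / D\<bar> \<le> 1" "1 \<le> a / D + b / D"
    using assms(4,5) D by (simp_all add: D_def flip: diff_divide_distrib add_divide_distrib)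
  moreover have "a / D \<ge> 0" "b / D \<ge> 0" using assms(2,3) D by simp_all
  ultimately have apex: "cmod (unit_apex (a / D) (b / D)) = a / D"
    "cmod (unit_apex (a / D) (b / D) - 1) = b / D" "Im (unit_apex (a / D) (b / D)) \<ge> 0"
    using unit_apex_norms by simp_all
  have p: "circles_apex ci a cj b = ci + (cj - ci) * unit_apex (a / D) (b / D)"
    by (simp add: circles_apex_def D_def)
  show "dist ci (circles_apex ci a cj b) = a"
    using apex D by (simp add: p dist_norm norm_mult D_def norm_minus_commute)
  have "circles_apex ci a cj b - cj = (cj - ci) * (unit_apex (a / D) (b / D) - 1)"
    by (simp add: p algebra_simps)
  then have "dist cj (circles_apex ci a cj b) = D * cmod (unit_apex (a / D) (b / D) - 1)"
    by (simp add: dist_norm norm_mult D_def norm_minus_commute[of cj])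
  then show "dist cj (circles_apex ci a cj b) = b" using apex D by simp
  show "(circles_apex ci a cj b - ci) \<bullet> (\<i> * (cj - ci)) \<ge> 0"
    using apex by (simp add: p inner_mult_normal)
qed

lemma sphere_inter_upper_eq:
  assumes "ci \<noteq> cj" "a \<ge> 0" "b \<ge> 0" "\<bar>a - b\<bar> \<le> cmod (cj - ci)" "cmod (cj - ci) \<le> a + b"
  shows "{d \<in> sphere ci a \<inter> sphere cj b. (d - ci) \<bullet> (\<i> * (cj - ci)) \<ge> 0} = {circles_apex ci a cj b}"
proof (intro equalityI subsetI)
  fix p assume "p \<in> {d \<in> sphere ci a \<inter> sphere cj b. (d - ci) \<bullet> (\<i> * (cj - ci)) \<ge> 0}"
  then have "dist ci p = a" "dist cj p = b" "(p - ci) \<bullet> (\<i> * (cj - ci)) \<ge> 0" by auto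
  note z = circle_point_normalized[OF assms(1) this(1,2)]
  from z(2,3) have "(p - ci) / (cj - ci) = unit_apex (a / cmod (cj - ci)) (b / cmod (cj - ci))"
    by (rule unit_apex_unique) (use z(4) \<open>(p - ci) \<bullet> _ \<ge> 0\<close> in blast)
  then show "p \<in> {circles_apex ci a cj b}" using z(1) by (simp add: circles_apex_def)
qed (use circles_apex_on_circles[OF assms] in auto)

lemma sphere_inter_tangent_eq:
  assumes "ci \<noteq> cj" "a \<ge> 0" "b \<ge> 0" "\<bar>a - b\<bar> = cmod (cj - ci)"
  shows "sphere ci a \<inter> sphere cj b = {circles_apex ci a cj b}"
proof (intro equalityI subsetI)
  fix p assume "p \<in> sphere ci a \<inter> sphere cj b"
  then have "dist ci p = a" "dist cj p = b" by auto
  note z = circle_point_normalized[OF assms(1) this]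
  have D: "cmod (cj - ci) > 0" using assms(1) by simp
  have "\<bar>a / cmod (cj - ci) - b / cmod (cj - ci)\<bar> = 1"
    using assms(4) D by (simp flip: diff_divide_distrib)
  with z(2,3) have "(p - ci) / (cj - ci) = unit_apex (a / cmod (cj - ci)) (b / cmod (cj - ci))"
    by (rule unit_apex_unique_tangent)
  then show "p \<in> {circles_apex ci a cj b}" using z(1) by (simp add: circles_apex_def)
qed (use circles_apex_on_circles[of ci cj a b] assms in auto)

lemma sphere_inter_empty_nested:
  fixes ci cj :: "'a::metric_space"
  assumes "\<bar>a - b\<bar> > dist ci cj"
  shows "sphere ci a \<inter> sphere cj b = {}"
proof -
  have "\<bar>dist ci p - dist cj p\<bar> \<le> dist ci cj" for p
    using dist_triangle[of ci p cj] dist_triangle[of cj p ci] by (simp add: dist_commute)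
  then have "\<bar>a - b\<bar> \<le> dist ci cj" if "p \<in> sphere ci a \<inter> sphere cj b" for p
    using that by auto
  then show ?thesis using assms by fastforce
qed

lemma dpt_eq_circles_apex:
  assumes "ci \<noteq> cj" "a \<ge> 0" "b \<ge> 0" "\<bar>a - b\<bar> \<le> cmod (cj - ci)" "cmod (cj - ci) \<le> a + b"
  shows "dpt ci a cj b = circles_apex ci a cj b"
proof -
  note upper = sphere_inter_upper_eq[OF assms]
  then have "sphere ci a \<inter> sphere cj b \<noteq> {}" by blast
  moreover have "(THE d. d \<in> sphere ci a \<inter> sphere cj b \<and> (d - ci) \<bullet> (\<i> * (cj - ci)) \<ge> 0)
      = circles_apex ci a cj b"
    using upper by (intro the_equality) blast+
  ultimately show ?thesis by (simp add: dpt_def)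
qed

lemma dpt_eq_circles_apex_nested:
  assumes "ci \<noteq> cj" "a \<ge> 0" "b \<ge> 0" "\<bar>a - b\<bar> > cmod (cj - ci)"
  shows "dpt ci a cj b = circles_apex ci (cmod (cj - ci) / \<bar>a - b\<bar> * a) cj (cmod (cj - ci) / \<bar>a - b\<bar> * b)"
proof -
  define l0 where "l0 = cmod (cj - ci) / \<bar>a - b\<bar>"
  have D: "cmod (cj - ci) > 0" using assms(1) by simp
  then have "l0 > 0" unfolding l0_def using assms(4) by (intro divide_pos_pos) linarith+
  have "\<bar>l0 * a - l0 * b\<bar> = l0 * \<bar>a - b\<bar>"
    using \<open>l0 > 0\<close> by (simp add: abs_mult flip: right_diff_distrib)
  also have "\<dots> = cmod (cj - ci)" using D assms(4) unfolding l0_def by force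
  finally have "\<bar>l0 * a - l0 * b\<bar> = cmod (cj - ci)" .
  then have "sphere ci (l0 * a) \<inter> sphere cj (l0 * b) = {circles_apex ci (l0 * a) cj (l0 * b)}"
    using assms(2,3) \<open>l0 > 0\<close> by (intro sphere_inter_tangent_eq[OF assms(1)]) simp_all
  then have "(THE d. d \<in> sphere ci (l0 * a) \<inter> sphere cj (l0 * b)) = circles_apex ci (l0 * a) cj (l0 * b)"
    by (intro the_equality) blast+
  moreover have "sphere ci a \<inter> sphere cj b = {}"
    using assms(4) by (intro sphere_inter_empty_nested) (simp add: dist_norm norm_minus_commute)
  moreover have "cmod (ci - cj) / \<bar>a - b\<bar> = l0" by (simp add: l0_def norm_minus_commute)
  ultimately show ?thesis by (simp add: dpt_def Let_def flip: l0_def)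
qed

lemma dpt_scaled_same_centre:
  assumes "ri \<noteq> rj"
  shows "dpt c (l * ri) c (l * rj) = c"
  using assms by (cases "l = 0") (auto simp: dpt_def)

lemma continuous_on_circles_apex:
  assumes "continuous_on S fa" "continuous_on S fb"
  shows "continuous_on S (\<lambda>x. circles_apex ci (fa x) cj (fb x))"
proof (cases "ci = cj")
  case False
  then show ?thesis unfolding circles_apex_def unit_apex_def Let_def Complex_eq
    using assms by (intro continuous_intros) auto
qed (simp add: circles_apex_def)

lemma continuous_on_dpt_scaled:
  assumes "ci \<noteq> cj" "ri > 0" "rj > 0" "cmod (cj - ci) / (ri + rj) \<le> nu"
  shows "continuous_on {nu..} (\<lambda>l. dpt ci (l * ri) cj (l * rj))"
proof -
  define D where "D = cmod (cj - ci)"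
  have D: "D > 0" using assms(1) by (simp add: D_def)
  text \<open>Beyond the scale D / |ri - rj| where the circles become internally tangent, the point
    stays frozen at its value there; so it is the apex evaluated at a clamped scale.\<close>
  define mu where "mu l = (if ri = rj then l else min l (D / \<bar>ri - rj\<bar>))" for l
  have eq: "dpt ci (l * ri) cj (l * rj) = circles_apex ci (mu l * ri) cj (mu l * rj)"
    if "nu \<le> l" for l
  proof -
    have "D / (ri + rj) \<le> l" using assms(4) that by (simp add: D_def)
    then have Dle: "D \<le> l * ri + l * rj" using assms(2,3) by (simp add: divide_le_eq algebra_simps)
    have l: "l > 0" using \<open>D / (ri + rj) \<le> l\<close> D assms(2,3) by (meson add_pos_pos divide_pos_pos order_less_le_trans)
    have ad: "\<bar>l * ri - l * rj\<bar> = l * \<bar>ri - rj\<bar>" using l by (simp add: abs_mult flip: right_diff_distrib)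
    show ?thesis
    proof (cases "l * \<bar>ri - rj\<bar> \<le> D")
      case True
      then have "mu l = l" using D by (auto simp: mu_def le_divide_eq mult.commute)
      then show ?thesis
        using dpt_eq_circles_apex[OF assms(1)] True Dle ad l assms(2,3) by (simp add: D_def)
    next
      case False
      then have "ri \<noteq> rj" using D by auto
      then have "mu l = D / \<bar>ri - rj\<bar>"
        using False by (simp add: mu_def divide_less_eq mult.commute)
      moreover have "D / \<bar>l * ri - l * rj\<bar> * (l * ri) = D / \<bar>ri - rj\<bar> * ri"
        "D / \<bar>l * ri - l * rj\<bar> * (l * rj) = D / \<bar>ri - rj\<bar> * rj" using l by (simp_all add: ad)
      ultimately show ?thesis
        using dpt_eq_circles_apex_nested[OF assms(1)] False ad l assms(2,3) by (simp add: D_def)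
    qed
  qed
  have "continuous_on {nu..} mu"
    unfolding mu_def by (cases "ri = rj") (auto intro!: continuous_intros)
  then have "continuous_on {nu..} (\<lambda>l. circles_apex ci (mu l * ri) cj (mu l * rj))"
    by (intro continuous_on_circles_apex continuous_intros)
  then show ?thesis by (rule continuous_on_eq) (simp add: eq)
qed

lemma continuous_on_Max_image:
  fixes f :: "'i \<Rightarrow> 'a::topological_space \<Rightarrow> real"
  assumes "finite A" "A \<noteq> {}" "\<And>a. a \<in> A \<Longrightarrow> continuous_on S (f a)"
  shows "continuous_on S (\<lambda>x. Max ((\<lambda>a. f a x) ` A))"
  using assms
proof (induction A rule: finite_ne_induct)
  case (insert a F)
  then have "continuous_on S (\<lambda>x. max (f a x) (Max ((\<lambda>a. f a x) ` F)))"
    by (intro continuous_on_max) auto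
  then show ?case using insert.hyps by simp
qed simp

lemma continuous_on_Min_image:
  fixes f :: "'i \<Rightarrow> 'a::topological_space \<Rightarrow> real"
  assumes "finite A" "A \<noteq> {}" "\<And>a. a \<in> A \<Longrightarrow> continuous_on S (f a)"
  shows "continuous_on S (\<lambda>x. Min ((\<lambda>a. f a x) ` A))"
  using assms
proof (induction A rule: finite_ne_induct)
  case (insert a F)
  then have "continuous_on S (\<lambda>x. min (f a x) (Min ((\<lambda>a. f a x) ` F)))"
    by (intro continuous_on_min) auto
  then show ?case using insert.hyps by simp
qed simp

lemma vr_scale_ge:
  assumes "i < m" "j < m" "i \<noteq> j"
  shows "cmod (c j - c i) / (r i + r j) \<le> vr_scale m c r"
proof -
  define S where "S = {cmod (c i - c j) / (r i + r j) | i j. i < j \<and> j < m}"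
  have "S \<subseteq> (\<lambda>(i, j). cmod (c i - c j) / (r i + r j)) ` ({..<m} \<times> {..<m})"
    by (auto simp: S_def)
  then have "finite S" by (rule finite_subset) simp
  moreover have "cmod (c j - c i) / (r i + r j) \<in> S"
  proof (cases "i < j")
    case True
    have "cmod (c i - c j) / (r i + r j) \<in> S" using True assms(2) unfolding S_def by blast
    then show ?thesis by (simp add: norm_minus_commute)
  next
    case False
    then have "j < i" using assms(3) by simp
    then have "cmod (c j - c i) / (r j + r i) \<in> S" using assms(1) unfolding S_def by blast
    then show ?thesis by (simp add: add.commute)
  qed
  ultimately show ?thesis by (simp add: vr_scale_def flip: S_def)
qed

lemma continuous_on_Lam:
  assumes "r i > 0" "r j > 0" "cball (c i) (r i) \<noteq> cball (c j) (r j)"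
    and "cmod (c j - c i) / (r i + r j) \<le> nu"
  shows "continuous_on {nu..} (Lam c r k i j)"
proof -
  have Lam: "Lam c r k i j = (\<lambda>l. l * r k - cmod (dpt (c i) (l * r i) (c j) (l * r j) - c k))"
    by (simp add: fun_eq_iff Lam_def dpt_scaled_def)
  show ?thesis
  proof (cases "c i = c j")
    case True
    then have "r i \<noteq> r j" using assms(3) by auto
    then have "Lam c r k i j = (\<lambda>l. l * r k - cmod (c i - c k))"
      using True by (simp add: Lam dpt_scaled_same_centre)
    then show ?thesis by (simp add: continuous_intros)
  next
    case False
    then have "continuous_on {nu..} (\<lambda>l. dpt (c i) (l * r i) (c j) (l * r j))"
      using assms by (intro continuous_on_dpt_scaled)
    then show ?thesis unfolding Lam by (intro continuous_intros)
  qed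
qed

lemma continuous_on_rho_fun:
  assumes "m \<ge> 3"
    and "\<And>i j k. i < m \<Longrightarrow> j < m \<Longrightarrow> k < m \<Longrightarrow> i \<noteq> j \<Longrightarrow> k \<noteq> i \<Longrightarrow> k \<noteq> j \<Longrightarrow>
           continuous_on S (Lam c r k i j)"
  shows "continuous_on S (rho_fun m c r)"
proof -
  define K where "K i j = {k. k < m \<and> k \<noteq> i \<and> k \<noteq> j}" for i j
  define P where "P = {(i, j). i < m \<and> j < m \<and> i \<noteq> j}"
  define g where "g i j l = Min ((\<lambda>k. Lam c r k i j l) ` K i j)" for i j l
  define f where "f = (\<lambda>(i, j). g i j)"
  have "{Lam c r k i j l | k. k < m \<and> k \<noteq> i \<and> k \<noteq> j} = (\<lambda>k. Lam c r k i j l) ` K i j"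
    for i j l by (auto simp: K_def)
  then have "rho_fun m c r l = Max {g i j l | i j. i < m \<and> j < m \<and> i \<noteq> j}" for l
    by (simp add: rho_fun_def g_def)
  also have "{g i j l | i j. i < m \<and> j < m \<and> i \<noteq> j} = (\<lambda>p. f p l) ` P" for l
    unfolding f_def P_def by force
  finally have "rho_fun m c r l = Max ((\<lambda>p. f p l) ` P)" for l .
  then have rho: "rho_fun m c r = (\<lambda>l. Max ((\<lambda>p. f p l) ` P))" by (simp add: fun_eq_iff)
  have "\<exists>k<m. k \<noteq> i \<and> k \<noteq> j" for i j using assms(1) by presburger
  then have K: "finite (K i j)" "K i j \<noteq> {}" for i j by (simp_all add: K_def)
  have "continuous_on S (g i j)" if "i < m" "j < m" "i \<noteq> j" for i j
    unfolding g_def using assms(2) that by (intro continuous_on_Min_image[OF K]) (simp add: K_def)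
  then have "continuous_on S (f p)" if "p \<in> P" for p
    using that by (auto simp: f_def P_def)
  moreover have "finite P" by (rule finite_subset[of _ "{..<m} \<times> {..<m}"]) (auto simp: P_def)
  moreover have "(0, 1) \<in> P" using assms(1) by (simp add: P_def)
  ultimately show ?thesis unfolding rho by (intro continuous_on_Max_image) auto
qed

theorem mainTheorem6:
  fixes m :: nat and c :: "nat \<Rightarrow> complex" and r :: "nat \<Rightarrow> real"
  assumes "m \<ge> 3"
    and "\<And>i. i < m \<Longrightarrow> r i > 0"
    and "\<And>i j. i < m \<Longrightarrow> j < m \<Longrightarrow> i \<noteq> j \<Longrightarrow> cball (c i) (r i) \<noteq> cball (c j) (r j)"
    and "vr_scale m c r > 0"
  shows "(\<forall>i<m. \<forall>j<m. \<forall>k<m. i \<noteq> j \<and> k \<noteq> i \<and> k \<noteq> j \<longrightarrow>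
            continuous_on {vr_scale m c r..} (Lam c r k i j))
         \<and> continuous_on {vr_scale m c r..} (rho_fun m c r)"
proof -
  have Lam: "continuous_on {vr_scale m c r..} (Lam c r k i j)"
    if "i < m" "j < m" "i \<noteq> j" for i j k
    using assms(2)[OF that(1)] assms(2)[OF that(2)] assms(3)[OF that] vr_scale_ge[OF that]
    by (rule continuous_on_Lam)
  then show ?thesis using continuous_on_rho_fun[OF assms(1)] by blast
qed

end
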